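(* Let $p,q,k$ be nonnegative integers with $k\le2\min\{p,q\}$, let $Q$ be a binary quadratic form with discriminant $\Delta$, and let $\mathcal{T}=(Q^p,Q^q)_k$. If $k$ is odd then $\mathcal{T}=0$. If $k=2m$ is even then $$\mathcal{T}=Q^{p+q-2m}\,(-\Delta)^m\,\mathcal{N}^{\rm II}_{p,q,m},\qquad \mathcal{N}^{\rm II}_{p,q,m}=\frac{p!\,q!\,(2m)!\,(p+q-m)!\,(2p-2m)!\,(2q-2m)!}{(2p)!\,(2q)!\,m!\,(p+q-2m)!\,(p-m)!\,(q-m)!}.$$
   Context: For binary forms $A,B$ in $(x_0,x_1)$ of degrees $a,b$ and $k\ge0$, $(A,B)_k=\frac{(a-k)!(b-k)!}{a!\,b!}\bigl[\Omega^kA(x_0,x_1)B(y_0,y_1)\bigr]_{\underline{y}:=\underline{x}}$ with $\Omega=\frac{\partial^2}{\partial x_0\partial y_1}-\frac{\partial^2}{\partial x_1\partial y_0}$. The discriminant is normalized so that for $Q=\lambda x_0^2+\mu x_0x_1+\nu x_1^2$ one has $\Delta=\mu^2-4\lambda\nu$; equivalently, if $Q=(r_0x_0+r_1x_1)(s_0x_0+s_1x_1)$ then $\Delta=(r_0s_1-r_1s_0)^2$. *)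

theory Defs
  imports "HOL-Computational_Algebra.Polynomial"
begin

text \<open>Binary forms in x0, x1 over a field of characteristic 0 are represented as
 bivariate polynomials of type 'a poly poly: the inner variable is x0, the outer
 variable is x1.\<close>

definition bconst :: "'a::field_char_0 \<Rightarrow> 'a poly poly" where
  "bconst c = [:[:c:]:]"

definition bX0 :: "'a::field_char_0 poly poly" where
  "bX0 = [:[:0, 1:]:]"

definition bX1 :: "'a::field_char_0 poly poly" where
  "bX1 = [:0, 1:]"

definition d0 :: "'a::field_char_0 poly poly \<Rightarrow> 'a poly poly" where
  "d0 P = map_poly pderiv P"

definition d1 :: "'a::field_char_0 poly poly \<Rightarrow> 'a poly poly" where
  "d1 P = pderiv P"

text \<open>The operator
 Omega^k = (d/dx0 d/dy1 - d/dx1 d/dy0)^k is expanded binomially (the two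
 summands commute); after setting y := x, the j-th term applies
 d0^(k-j) d1^j to A and d1^(k-j) d0^j to B, with sign (-1)^j.\<close>
definition transvectant ::
  "nat \<Rightarrow> nat \<Rightarrow> nat \<Rightarrow> 'a::field_char_0 poly poly \<Rightarrow> 'a poly poly \<Rightarrow> 'a poly poly" where
  "transvectant a b k A B =
     bconst (fact (a - k) * fact (b - k) / (fact a * fact b)) *
     (\<Sum>j\<le>k. bconst ((-1) ^ j * of_nat (k choose j)) *
        (((d0 ^^ (k - j)) ((d1 ^^ j) A)) * ((d1 ^^ (k - j)) ((d0 ^^ j) B))))"

end

theory Submission
  imports Defs
begin

(* The transvectant (A, B)_k is a constant multiple of Cayley's Omega^k (A(x) B(y)) restricted to
   the diagonal y = x.  For A = Q^p and B = Q^q, Omega preserves the span of the products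
   Q(x)^a Q(y)^b W^c with the bracket W = x0 y1 - x1 y0: by Euler's identity for Q, and because
   the Jacobian of Q(x) and Q(y) is -Delta W,
     Omega (Q(x)^a Q(y)^b W^c) = -Delta a b Q(x)^(a-1) Q(y)^(b-1) W^(c+1)
                                 + c (c + 1 + 2a + 2b) Q(x)^a Q(y)^b W^(c-1).
   Hence Omega^k (Q(x)^p Q(y)^q) is a combination of the terms with a = p - u, b = q - u,
   c = 2u - k, whose coefficients satisfy a two-term recursion with an explicit factorial
   solution.  W vanishes on the diagonal, so only the term with 2u = k survives. *)

section \<open>Ring homomorphisms and derivations\<close>

locale comm_ring_hom =
  fixes h :: "'a::comm_ring_1 \<Rightarrow> 'b::comm_ring_1"
  assumes hom_add [simp]: "h (x + y) = h x + h y"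
    and hom_mult [simp]: "h (x * y) = h x * h y"
    and hom_one [simp]: "h 1 = 1"
begin

lemma hom_zero [simp]: "h 0 = 0"
  using hom_add[of 0 0] by simp

lemma hom_uminus [simp]: "h (- x) = - h x"
  using hom_add[of x "- x"] by (simp add: eq_neg_iff_add_eq_0 add.commute)

lemma hom_diff [simp]: "h (x - y) = h x - h y"
  using hom_add[of x "- y"] by simp

lemma hom_power [simp]: "h (x ^ n) = h x ^ n"
  by (induction n) simp_all

lemma hom_of_nat [simp]: "h (of_nat n) = of_nat n"
  by (induction n) simp_all

lemma hom_numeral [simp]: "h (numeral n) = numeral n"
  using hom_of_nat[of "numeral n"] by simp

lemma hom_sum: "h (sum f A) = (\<Sum>x\<in>A. h (f x))"
  by (induction A rule: infinite_finite_induct) simp_all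

lemma comm_ring_hom_map_poly: "comm_ring_hom (map_poly h)"
  by unfold_locales (auto intro!: poly_eqI simp: coeff_map_poly coeff_mult hom_sum)

end

lemma comm_ring_hom_comp:
  "comm_ring_hom g \<Longrightarrow> comm_ring_hom h \<Longrightarrow> comm_ring_hom (g \<circ> h)"
  by (simp add: comm_ring_hom_def)

lemma comm_ring_hom_poly: "comm_ring_hom (\<lambda>p. poly p x)"
  by unfold_locales simp_all

lemma pderiv_map_poly:
  fixes f :: "'a::idom \<Rightarrow> 'b::idom"
  assumes additive: "\<And>x y. f (x + y) = f x + f y"
  shows "pderiv (map_poly f p) = map_poly f (pderiv p)"
proof -
  have f0: "f 0 = 0"
    using additive[of 0 0] by (metis add_cancel_right_right)
  have "f (of_nat n * x) = of_nat n * f x" for n x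
    by (induction n) (simp_all add: f0 additive distrib_right)
  then show ?thesis
    by (intro poly_eqI) (simp add: coeff_map_poly coeff_pderiv f0 del: of_nat_Suc)
qed

locale derivation =
  fixes D :: "'a::comm_ring_1 \<Rightarrow> 'a"
  assumes add: "D (x + y) = D x + D y"
    and mult: "D (x * y) = D x * y + x * D y"
begin

lemma zero: "D 0 = 0"
  using add[of 0 0] by simp

lemma one: "D 1 = 0"
  using mult[of 1 1] by simp

lemma uminus: "D (- x) = - D x"
  using add[of x "- x"] by (simp add: zero eq_neg_iff_add_eq_0 add.commute)

lemma diff: "D (x - y) = D x - D y"
  using add[of x "- y"] by (simp add: uminus)

lemma of_nat: "D (of_nat n) = 0"
  by (induction n) (simp_all add: zero one add)

lemma sum: "D (sum f A) = (\<Sum>x\<in>A. D (f x))"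
  by (induction A rule: infinite_finite_induct) (simp_all add: zero add)

lemma power: "D (x ^ n) = of_nat n * x ^ (n - 1) * D x"
proof (induction n)
  case (Suc n)
  then show ?case
    by (cases n) (simp_all add: mult algebra_simps)
qed (simp add: one)

lemma derivation_map_poly: "derivation (map_poly D)"
  by unfold_locales
    (auto intro!: poly_eqI simp: coeff_map_poly coeff_mult zero add mult sum sum.distrib)

end

lemma derivation_pderiv: "derivation (pderiv :: 'a::idom poly \<Rightarrow> _)"
  by unfold_locales (simp_all add: pderiv_add pderiv_mult algebra_simps)

interpretation bconst: comm_ring_hom "bconst :: 'a::field_char_0 \<Rightarrow> _"
  by unfold_locales (simp_all add: bconst_def one_pCons)

interpretation d0: derivation "d0 :: 'a::field_char_0 poly poly \<Rightarrow> _"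
  unfolding d0_def[abs_def] by (rule derivation.derivation_map_poly[OF derivation_pderiv])

interpretation d1: derivation "d1 :: 'a::field_char_0 poly poly \<Rightarrow> _"
  unfolding d1_def[abs_def] by (rule derivation_pderiv)

lemma d0_d1_commute: "d0 (d1 A) = d1 (d0 A)"
  unfolding d0_def d1_def by (rule pderiv_map_poly[symmetric]) (simp add: pderiv_add)

lemma d1_iterate_d0: "(d1 ^^ j) (d0 A) = d0 ((d1 ^^ j) A)"
  by (induction j) (simp_all add: d0_d1_commute)

lemma d0_iterate_d1: "(d0 ^^ j) (d1 A) = d1 ((d0 ^^ j) A)"
  by (induction j) (simp_all add: d0_d1_commute)

lemma d0_bconst [simp]: "d0 (bconst c) = 0"
  by (simp add: d0_def bconst_def map_poly_pCons)

lemma d1_bconst [simp]: "d1 (bconst c) = 0"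
  by (simp add: d1_def bconst_def)

lemma d0_bX0 [simp]: "d0 bX0 = 1"
  by (simp add: d0_def bX0_def one_pCons map_poly_pCons pderiv_pCons)

lemma d0_bX1 [simp]: "d0 bX1 = 0"
  by (simp add: d0_def bX1_def map_poly_pCons)

lemma d1_bX0 [simp]: "d1 bX0 = 0"
  by (simp add: d1_def bX0_def)

lemma d1_bX1 [simp]: "d1 bX1 = 1"
  by (simp add: d1_def bX1_def pderiv_pCons)

section \<open>Forms in two pairs of variables and the Omega process\<close>

(* Forms in x and y: the two inner polynomial layers are x0 and x1 as in Defs, the third layer
   is y0 and the outermost one y1. *)
type_synonym 'a xypoly = "'a poly poly poly poly"

definition lift_x :: "'a::field_char_0 poly poly \<Rightarrow> 'a xypoly" where
  "lift_x A = [:[:A:]:]"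

definition lift_y :: "'a::field_char_0 poly poly \<Rightarrow> 'a xypoly" where
  "lift_y B = map_poly (map_poly bconst) B"

abbreviation xyconst :: "'a::field_char_0 \<Rightarrow> 'a xypoly" where
  "xyconst c \<equiv> lift_x (bconst c)"

definition diag :: "'a::field_char_0 xypoly \<Rightarrow> 'a poly poly" where
  "diag P = poly (map_poly (\<lambda>r. poly r bX0) P) bX1"

definition Dx0 :: "'a::field_char_0 xypoly \<Rightarrow> 'a xypoly" where
  "Dx0 = map_poly (map_poly d0)"

definition Dx1 :: "'a::field_char_0 xypoly \<Rightarrow> 'a xypoly" where
  "Dx1 = map_poly (map_poly d1)"

definition Dy0 :: "'a::field_char_0 xypoly \<Rightarrow> 'a xypoly" where
  "Dy0 = map_poly pderiv"

definition Dy1 :: "'a::field_char_0 xypoly \<Rightarrow> 'a xypoly" where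
  "Dy1 = pderiv"

definition Omega :: "'a::field_char_0 xypoly \<Rightarrow> 'a xypoly" where
  "Omega P = Dx0 (Dy1 P) - Dx1 (Dy0 P)"

interpretation lift_x: comm_ring_hom "lift_x :: 'a::field_char_0 poly poly \<Rightarrow> _"
  by unfold_locales (simp_all add: lift_x_def one_pCons)

interpretation lift_y: comm_ring_hom "lift_y :: 'a::field_char_0 poly poly \<Rightarrow> _"
  unfolding lift_y_def[abs_def]
  by (rule bconst.comm_ring_hom_map_poly[THEN comm_ring_hom.comm_ring_hom_map_poly])

interpretation diag: comm_ring_hom "diag :: 'a::field_char_0 xypoly \<Rightarrow> _"
proof -
  have "comm_ring_hom ((\<lambda>P. poly P bX1) \<circ> map_poly (\<lambda>r. poly r (bX0 :: 'a poly poly)))"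
    by (intro comm_ring_hom_comp comm_ring_hom_poly comm_ring_hom.comm_ring_hom_map_poly)
  then show "comm_ring_hom (diag :: 'a xypoly \<Rightarrow> _)"
    by (simp add: diag_def[abs_def] comp_def)
qed

interpretation Dx0: derivation "Dx0 :: 'a::field_char_0 xypoly \<Rightarrow> _"
  unfolding Dx0_def by (rule d0.derivation_map_poly[THEN derivation.derivation_map_poly])

interpretation Dx1: derivation "Dx1 :: 'a::field_char_0 xypoly \<Rightarrow> _"
  unfolding Dx1_def by (rule d1.derivation_map_poly[THEN derivation.derivation_map_poly])

interpretation Dy0: derivation "Dy0 :: 'a::field_char_0 xypoly \<Rightarrow> _"
  unfolding Dy0_def by (rule derivation.derivation_map_poly[OF derivation_pderiv])

interpretation Dy1: derivation "Dy1 :: 'a::field_char_0 xypoly \<Rightarrow> _"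
  unfolding Dy1_def by (rule derivation_pderiv)

lemma diag_lift_x [simp]: "diag (lift_x A) = A"
  by (simp add: diag_def lift_x_def map_poly_pCons)

lemma diag_lift_y [simp]: "diag (lift_y B) = B"
proof -
  have "poly (map_poly bconst r) bX0 = [:r:]" for r :: "'a poly"
    by (induction r) (simp_all add: map_poly_pCons bconst_def bX0_def)
  then have "map_poly (\<lambda>r. poly r bX0) (lift_y B) = map_poly (\<lambda>r. [:r:]) B"
    by (simp add: lift_y_def map_poly_map_poly comp_def)
  then show ?thesis
    by (simp add: diag_def bX1_def pcompose_altdef[symmetric])
qed

lemma map_poly_zero_fun [simp]: "map_poly (\<lambda>_. 0) p = 0"
  by (rule poly_eqI) (simp add: coeff_map_poly)

lemma Dx0_lift_x [simp]: "Dx0 (lift_x A) = lift_x (d0 A)"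
  by (simp add: Dx0_def lift_x_def map_poly_pCons d0.zero)

lemma Dx1_lift_x [simp]: "Dx1 (lift_x A) = lift_x (d1 A)"
  by (simp add: Dx1_def lift_x_def map_poly_pCons d1.zero)

lemma Dy0_lift_x [simp]: "Dy0 (lift_x A) = 0"
  by (simp add: Dy0_def lift_x_def map_poly_pCons)

lemma Dy1_lift_x [simp]: "Dy1 (lift_x A) = 0"
  by (simp add: Dy1_def lift_x_def)

lemma Dx0_lift_y [simp]: "Dx0 (lift_y B) = 0"
  by (simp add: Dx0_def lift_y_def map_poly_map_poly comp_def d0.zero)

lemma Dx1_lift_y [simp]: "Dx1 (lift_y B) = 0"
  by (simp add: Dx1_def lift_y_def map_poly_map_poly comp_def d1.zero)

lemma Dy0_lift_y [simp]: "Dy0 (lift_y B) = lift_y (d0 B)"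
  by (simp add: Dy0_def lift_y_def d0_def map_poly_map_poly comp_def pderiv_map_poly)

lemma Dy1_lift_y [simp]: "Dy1 (lift_y B) = lift_y (d1 B)"
  unfolding Dy1_def lift_y_def d1_def
  by (rule pderiv_map_poly) (rule comm_ring_hom.hom_add[OF bconst.comm_ring_hom_map_poly])

lemma Omega_diff: "Omega (P - R) = Omega P - Omega R"
  by (simp add: Omega_def Dx0.diff Dx1.diff Dy0.diff Dy1.diff)

lemma Omega_iterate_diff: "(Omega ^^ k) (P - R) = (Omega ^^ k) P - (Omega ^^ k) R"
  by (induction k) (simp_all add: Omega_diff)

lemma Omega_sum: "Omega (sum f A) = (\<Sum>x\<in>A. Omega (f x))"
  by (simp add: Omega_def Dx0.sum Dx1.sum Dy0.sum Dy1.sum sum_subtractf)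

lemma Omega_xyconst_mult: "Omega (xyconst c * P) = xyconst c * Omega P"
  by (simp add: Omega_def Dx0.mult Dx1.mult Dy0.mult Dy1.mult right_diff_distrib)

lemma Omega_mult:
  "Omega (P * R) = Omega P * R + P * Omega R
     + (Dx0 P * Dy1 R + Dy1 P * Dx0 R - Dx1 P * Dy0 R - Dy0 P * Dx1 R)"
  by (simp add: Omega_def Dx0.mult Dx1.mult Dy0.mult Dy1.mult Dx0.add Dx1.add algebra_simps)

lemma Omega_lift_mult:
  "Omega (lift_x A * lift_y B) = lift_x (d0 A) * lift_y (d1 B) - lift_x (d1 A) * lift_y (d0 B)"
  by (simp add: Omega_def Dx0.mult Dx1.mult Dy0.mult Dy1.mult)

lemma alternating_binomial_sum_Suc:
  fixes f :: "nat \<Rightarrow> 'a::comm_ring_1"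
  shows "(\<Sum>j\<le>Suc n. (-1) ^ j * of_nat (Suc n choose j) * f j)
       = (\<Sum>j\<le>n. (-1) ^ j * of_nat (n choose j) * (f j - f (Suc j)))"
proof -
  have "(\<Sum>j\<le>Suc n. (-1) ^ j * of_nat (Suc n choose j) * f j)
      = f 0 + (\<Sum>j\<le>n. (-1) ^ Suc j * of_nat (n choose Suc j) * f (Suc j))
          + (\<Sum>j\<le>n. (-1) ^ Suc j * of_nat (n choose j) * f (Suc j))"
    unfolding sum.atMost_Suc_shift binomial_Suc_Suc of_nat_add
    by (simp add: algebra_simps sum.distrib[symmetric] del: sum.atMost_Suc)
  also have "f 0 + (\<Sum>j\<le>n. (-1) ^ Suc j * of_nat (n choose Suc j) * f (Suc j))
      = (\<Sum>j\<le>Suc n. (-1) ^ j * of_nat (n choose j) * f j)"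
    by (subst sum.atMost_Suc_shift) simp
  also have "\<dots> = (\<Sum>j\<le>n. (-1) ^ j * of_nat (n choose j) * f j)"
    by (simp add: binomial_eq_0)
  finally show ?thesis
    by (simp add: right_diff_distrib sum_subtractf sum_negf)
qed

definition transvectant_sum ::
  "nat \<Rightarrow> 'a::field_char_0 poly poly \<Rightarrow> 'a poly poly \<Rightarrow> 'a poly poly" where
  "transvectant_sum k A B = (\<Sum>j\<le>k. (-1) ^ j * of_nat (k choose j) *
     ((d0 ^^ (k - j)) ((d1 ^^ j) A) * (d1 ^^ (k - j)) ((d0 ^^ j) B)))"

lemma transvectant_sum_Suc:
  "transvectant_sum (Suc k) A B
     = transvectant_sum k (d0 A) (d1 B) - transvectant_sum k (d1 A) (d0 B)"
proof -
  have "(d0 ^^ (Suc k - j)) ((d1 ^^ j) A) * (d1 ^^ (Suc k - j)) ((d0 ^^ j) B)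
      = (d0 ^^ (k - j)) ((d1 ^^ j) (d0 A)) * (d1 ^^ (k - j)) ((d0 ^^ j) (d1 B))"
    if "j \<le> k" for j
    using that
    by (simp add: Suc_diff_le funpow_Suc_right d1_iterate_d0 d0_iterate_d1 del: funpow.simps)
  then show ?thesis
    unfolding transvectant_sum_def alternating_binomial_sum_Suc
    by (simp add: right_diff_distrib sum_subtractf funpow_Suc_right del: funpow.simps)
qed

lemma diag_Omega_iterate_lift_mult:
  "diag ((Omega ^^ k) (lift_x A * lift_y B)) = transvectant_sum k A B"
proof (induction k arbitrary: A B)
  case 0
  then show ?case
    by (simp add: transvectant_sum_def)
next
  case (Suc k)
  then show ?case
    by (simp only: funpow_Suc_right o_apply Omega_lift_mult Omega_iterate_diff diag.hom_diff
        transvectant_sum_Suc)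
qed

lemma transvectant_eq_diag_Omega:
  "transvectant a b k A B
     = bconst (fact (a - k) * fact (b - k) / (fact a * fact b))
       * diag ((Omega ^^ k) (lift_x A * lift_y B))"
  by (simp add: transvectant_def diag_Omega_iterate_lift_mult transvectant_sum_def)

section \<open>Omega on products of powers of a quadratic form\<close>

definition bracket :: "'a::field_char_0 xypoly" where
  "bracket = lift_x bX0 * lift_y bX1 - lift_x bX1 * lift_y bX0"

definition qqw :: "'a::field_char_0 poly poly \<Rightarrow> nat \<Rightarrow> nat \<Rightarrow> nat \<Rightarrow> 'a xypoly" where
  "qqw Q a b c = lift_x (Q ^ a) * lift_y (Q ^ b) * bracket ^ c"

lemma derivatives_bracket:
  "Dx0 bracket = lift_y bX1" "Dx1 bracket = - lift_y bX0"
  "Dy0 bracket = - lift_x bX1" "Dy1 bracket = lift_x bX0"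
  by (simp_all add: bracket_def Dx0.diff Dx0.mult Dx1.diff Dx1.mult Dy0.diff Dy0.mult
      Dy1.diff Dy1.mult)

lemma diag_bracket: "diag bracket = 0"
  by (simp add: bracket_def)

lemma Omega_bracket_power: "Omega (bracket ^ c) = of_nat (c * (c + 1)) * bracket ^ (c - 1)"
proof -
  have "Omega (bracket ^ c) = of_nat c * (of_nat (c - 1) * bracket ^ (c - 1 - 1)
      * (lift_x bX0 * lift_y bX1 - lift_x bX1 * lift_y bX0) + 2 * bracket ^ (c - 1))"
    by (simp add: Omega_def Dx0.mult Dx1.mult Dy0.power Dy1.power Dx0.power Dx1.power
        Dx0.of_nat Dx1.of_nat Dx1.uminus derivatives_bracket algebra_simps)
  also have "\<dots> = of_nat c * (of_nat (c - 1) * bracket ^ (c - 1 - 1) * bracket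
      + 2 * bracket ^ (c - 1))"
    by (simp only: bracket_def)
  also have "\<dots> = of_nat (c * (c + 1)) * bracket ^ (c - 1)"
    by (cases c; cases "c - 1") (simp_all add: algebra_simps)
  finally show ?thesis .
qed

lemma euler_power:
  assumes "bX0 * d0 F + bX1 * d1 F = of_nat n * F"
  shows "bX0 * d0 (F ^ a) + bX1 * d1 (F ^ a) = of_nat (n * a) * F ^ a"
proof -
  have "bX0 * d0 (F ^ a) + bX1 * d1 (F ^ a) = of_nat a * F ^ (a - 1) * (of_nat n * F)"
    by (simp add: d0.power d1.power flip: assms) (simp add: algebra_simps)
  also have "\<dots> = of_nat (n * a) * F ^ a"
    by (cases a) (simp_all add: algebra_simps)
  finally show ?thesis .
qed

lemma Omega_qqw:
  assumes euler: "bX0 * d0 Q + bX1 * d1 Q = 2 * Q"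
    and jacobian:
      "lift_x (d0 Q) * lift_y (d1 Q) - lift_x (d1 Q) * lift_y (d0 Q) = xyconst D * bracket"
  shows "Omega (qqw Q a b c)
    = xyconst (D * of_nat (a * b)) * qqw Q (a - 1) (b - 1) (Suc c)
      + xyconst (of_nat (c * (c + 1 + 2 * a + 2 * b))) * qqw Q a b (c - 1)"
proof -
  define f where "f = lift_x (Q ^ a) * lift_y (Q ^ b)"
  have "Omega f = of_nat a * of_nat b * lift_x (Q ^ (a - 1)) * lift_y (Q ^ (b - 1))
      * (lift_x (d0 Q) * lift_y (d1 Q) - lift_x (d1 Q) * lift_y (d0 Q))"
    unfolding f_def Omega_lift_mult by (simp add: d0.power d1.power algebra_simps)
  then have Omega_f:
    "Omega f = xyconst (D * of_nat (a * b)) * lift_x (Q ^ (a - 1)) * lift_y (Q ^ (b - 1)) * bracket"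
    by (simp add: jacobian algebra_simps)
  have "Dx0 f * Dy1 (bracket ^ c) + Dy1 f * Dx0 (bracket ^ c)
      - Dx1 f * Dy0 (bracket ^ c) - Dy0 f * Dx1 (bracket ^ c)
      = of_nat c * bracket ^ (c - 1)
        * (lift_x (bX0 * d0 (Q ^ a) + bX1 * d1 (Q ^ a)) * lift_y (Q ^ b)
           + lift_x (Q ^ a) * lift_y (bX0 * d0 (Q ^ b) + bX1 * d1 (Q ^ b)))"
    by (simp add: f_def Dx0.mult Dx1.mult Dy0.mult Dy1.mult Dx0.power Dx1.power Dy0.power
        Dy1.power d0.power d1.power derivatives_bracket algebra_simps)
  also have "\<dots> = of_nat (c * (2 * a + 2 * b)) * bracket ^ (c - 1) * f"
    using euler_power[of Q 2] euler by (simp add: f_def algebra_simps)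
  finally have cross: "Dx0 f * Dy1 (bracket ^ c) + Dy1 f * Dx0 (bracket ^ c)
      - Dx1 f * Dy0 (bracket ^ c) - Dy0 f * Dx1 (bracket ^ c)
      = of_nat (c * (2 * a + 2 * b)) * bracket ^ (c - 1) * f" .
  have "Omega (qqw Q a b c)
      = Omega f * bracket ^ c + f * Omega (bracket ^ c)
        + of_nat (c * (2 * a + 2 * b)) * bracket ^ (c - 1) * f"
    by (simp only: qqw_def f_def[symmetric] Omega_mult cross)
  also have "\<dots> = xyconst (D * of_nat (a * b)) * qqw Q (a - 1) (b - 1) (Suc c)
      + xyconst (of_nat (c * (c + 1 + 2 * a + 2 * b))) * qqw Q a b (c - 1)"
    unfolding Omega_f Omega_bracket_power by (simp add: qqw_def f_def algebra_simps)
  finally show ?thesis .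
qed

lemma diag_qqw: "diag (qqw Q a b c) = (if c = 0 then Q ^ (a + b) else 0)"
  by (simp add: qqw_def power_add diag_bracket)

definition binary_quadratic :: "'a::field_char_0 \<Rightarrow> 'a \<Rightarrow> 'a \<Rightarrow> 'a poly poly" where
  "binary_quadratic lam mu nu = bconst lam * bX0 ^ 2 + bconst mu * bX0 * bX1 + bconst nu * bX1 ^ 2"

lemma derivatives_binary_quadratic:
  "d0 (binary_quadratic lam mu nu) = 2 * bconst lam * bX0 + bconst mu * bX1"
  "d1 (binary_quadratic lam mu nu) = bconst mu * bX0 + 2 * bconst nu * bX1"
  by (simp_all add: binary_quadratic_def d0.add d0.mult d0.power d1.add d1.mult d1.power)

lemma euler_binary_quadratic:
  "bX0 * d0 (binary_quadratic lam mu nu) + bX1 * d1 (binary_quadratic lam mu nu)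
     = 2 * binary_quadratic lam mu nu"
  unfolding derivatives_binary_quadratic
  by (simp add: binary_quadratic_def algebra_simps power2_eq_square)

lemma jacobian_binary_quadratic:
  fixes lam mu nu :: "'a::field_char_0"
  defines "Q \<equiv> binary_quadratic lam mu nu"
  shows "lift_x (d0 Q) * lift_y (d1 Q) - lift_x (d1 Q) * lift_y (d0 Q)
    = xyconst (- (mu ^ 2 - 4 * lam * nu)) * bracket"
proof -
  have "lift_y (bconst c) = xyconst c" for c :: 'a
    by (simp add: lift_y_def lift_x_def bconst_def map_poly_pCons)
  then show ?thesis
    by (simp add: Q_def derivatives_binary_quadratic bracket_def algebra_simps power2_eq_square)
qed

section \<open>The coefficients of the iterated Omega process\<close>

definition omega_comb :: "nat \<Rightarrow> nat \<Rightarrow> nat \<Rightarrow> 'a::field_char_0" where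
  "omega_comb N k u = (if u \<le> k \<and> k \<le> 2 * u
     then fact k * fact (N - u) / (fact (k - u) * fact (2 * u - k) * fact (N - k)) else 0)"

(* The main case of omega_comb_Suc, in the variables d = k - u, c = 2u - k - 1, g = N - 2u,
   which avoid truncated subtraction. *)
lemma omega_comb_identity:
  fixes d c g :: nat
  shows "(fact (2 * d + c + 2) * fact (d + c + g + 1)
      / (fact (d + 1) * fact c * fact (c + g)) :: 'a::field_char_0)
    = of_nat c * (fact (2 * d + c + 1) * fact (d + c + g + 2)
        / (fact (d + 1) * fact c * fact (c + g + 1)))
      + of_nat ((c + 1) * (c + 2 + 2 * g)) * (fact (2 * d + c + 1) * fact (d + c + g + 1)
        / (fact d * fact (c + 1) * fact (c + g + 1)))"
proof -
  define X :: 'a where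
    "X = fact (2 * d + c + 1) * fact (d + c + g + 1) / (fact (d + 1) * fact c * fact (c + g + 1))"
  have fact_step: "fact (n + 1) = (of_nat (n + 1) * fact n :: 'a)" for n
    by simp
  have nonzero: "(of_nat (n + 1) :: 'a) \<noteq> 0" for n
    by (metis of_nat_eq_0_iff add_eq_0_iff_both_eq_0 one_neq_zero)
  have "fact (2 * d + c + 2) * fact (d + c + g + 1) / (fact (d + 1) * fact c * fact (c + g))
      = of_nat ((2 * d + c + 2) * (c + g + 1)) * X"
    using fact_step[of "2 * d + c + 1"] fact_step[of "c + g"] nonzero[of "c + g"]
    by (simp add: X_def field_simps del: fact_Suc of_nat_Suc; simp add: algebra_simps)
  also have "(2 * d + c + 2) * (c + g + 1) = c * (d + c + g + 2) + (c + 2 + 2 * g) * (d + 1)"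
    by (simp add: algebra_simps)
  also have "of_nat (c * (d + c + g + 2) + (c + 2 + 2 * g) * (d + 1)) * X
      = of_nat (c * (d + c + g + 2)) * X + of_nat ((c + 2 + 2 * g) * (d + 1)) * X"
    by (simp only: of_nat_add distrib_right)
  also have "of_nat (c * (d + c + g + 2)) * X = of_nat c * (fact (2 * d + c + 1)
      * fact (d + c + g + 2) / (fact (d + 1) * fact c * fact (c + g + 1)))"
    using fact_step[of "d + c + g + 1"]
    by (simp add: X_def field_simps del: fact_Suc of_nat_Suc; simp add: algebra_simps)
  also have "of_nat ((c + 2 + 2 * g) * (d + 1)) * X
      = of_nat ((c + 1) * (c + 2 + 2 * g)) * (fact (2 * d + c + 1) * fact (d + c + g + 1)
        / (fact d * fact (c + 1) * fact (c + g + 1)))"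
    using fact_step[of d] fact_step[of c] nonzero[of d] nonzero[of c]
    by (simp add: X_def field_simps del: fact_Suc of_nat_Suc; simp add: algebra_simps)
  finally show ?thesis .
qed

lemma omega_comb_Suc:
  assumes "2 * u \<le> N" "Suc k \<le> N"
  shows "(omega_comb N (Suc k) u :: 'a::field_char_0)
    = (if u = 0 then 0 else omega_comb N k (u - 1))
      + of_nat ((2 * u - k) * (2 * u - k + 1 + 2 * (N - 2 * u))) * omega_comb N k u"
proof -
  consider "u = 0" | "u = Suc k" | "u \<noteq> 0" "\<not> (u \<le> Suc k \<and> Suc k \<le> 2 * u)"
    | "u \<le> k" "Suc k \<le> 2 * u"
    by linarith
  then show ?thesis
  proof cases
    case 3
    then have "\<not> (u - 1 \<le> k \<and> k \<le> 2 * (u - 1))"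
      "2 * u - k = 0 \<or> \<not> (u \<le> k \<and> k \<le> 2 * u)"
      by linarith+
    with 3 show ?thesis
      by (auto simp: omega_comb_def)
  next
    case 4
    define d c g where "d = k - u" and "c = 2 * u - Suc k" and "g = N - 2 * u"
    have k: "k = 2 * d + c + 1" and u: "u = d + c + 1" and N: "N = 2 * d + 2 * c + 2 + g"
      using 4 assms by (simp_all add: d_def c_def g_def)
    have lhs: "omega_comb N (Suc k) u = (fact (2 * d + c + 2) * fact (d + c + g + 1)
        / (fact (d + 1) * fact c * fact (c + g)) :: 'a)"
      by (simp add: omega_comb_def k u N add_ac)
    have low: "omega_comb N k (u - 1) = of_nat c * (fact (2 * d + c + 1) * fact (d + c + g + 2)
        / (fact (d + 1) * fact c * fact (c + g + 1)) :: 'a)"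
    proof (cases c)
      case (Suc c')
      have "u - 1 \<le> k \<and> k \<le> 2 * (u - 1)" "k - (u - 1) = d + 1" "2 * (u - 1) - k = c'"
        "N - (u - 1) = d + c + g + 2" "N - k = c + g + 1"
        using Suc by (simp_all add: k u N)
      then have "omega_comb N k (u - 1) = (fact (2 * d + c + 1) * fact (d + c + g + 2)
          / (fact (d + 1) * fact c' * fact (c + g + 1)) :: 'a)"
        by (simp only: omega_comb_def k simp_thms if_True)
      then show ?thesis
        by (simp add: Suc fact_Suc[of c'] del: fact_Suc of_nat_Suc)
    qed (simp add: omega_comb_def k u)
    have high: "omega_comb N k u = (fact (2 * d + c + 1) * fact (d + c + g + 1)
        / (fact d * fact (c + 1) * fact (c + g + 1)) :: 'a)"
      by (simp add: omega_comb_def k u N add_ac)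
    have weight: "(2 * u - k) * (2 * u - k + 1 + 2 * (N - 2 * u)) = (c + 1) * (c + 2 + 2 * g)"
      by (simp add: k u N)
    have "u \<noteq> 0"
      by (simp add: u)
    show ?thesis
      unfolding lhs low high weight if_not_P[OF \<open>u \<noteq> 0\<close>] by (rule omega_comb_identity)
  qed (simp_all add: omega_comb_def del: fact_Suc)
qed

(* The product is the falling factorial p^(u) q^(u); it vanishes for u > min p q, which is what
   keeps omega_coeff_Suc valid there. *)
definition omega_coeff :: "'a::field_char_0 \<Rightarrow> nat \<Rightarrow> nat \<Rightarrow> nat \<Rightarrow> nat \<Rightarrow> 'a" where
  "omega_coeff D p q k u = D ^ u * (\<Prod>i<u. of_nat ((p - i) * (q - i))) * omega_comb (p + q) k u"

lemma omega_coeff_eq_0: "k < u \<or> 2 * u < k \<Longrightarrow> omega_coeff D p q k u = 0"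
  by (auto simp: omega_coeff_def omega_comb_def)

lemma omega_coeff_Suc:
  assumes "Suc k \<le> p + q"
  shows "omega_coeff D p q (Suc k) u
    = (if u = 0 then 0 else D * of_nat ((p - (u - 1)) * (q - (u - 1))) * omega_coeff D p q k (u - 1))
      + of_nat ((2 * u - k) * (2 * u - k + 1 + 2 * (p - u) + 2 * (q - u))) * omega_coeff D p q k u"
proof (cases "u \<le> p \<and> u \<le> q")
  case True
  then have "p + q - 2 * u = (p - u) + (q - u)"
    by linarith
  define w :: 'a where "w = of_nat ((2 * u - k) * (2 * u - k + 1 + 2 * (p - u) + 2 * (q - u)))"
  have "omega_comb (p + q) (Suc k) u
      = (if u = 0 then 0 else omega_comb (p + q) k (u - 1)) + w * omega_comb (p + q) k u"
    using True assms \<open>p + q - 2 * u = (p - u) + (q - u)\<close> by (simp add: omega_comb_Suc w_def)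
  then show ?thesis
    unfolding omega_coeff_def w_def[symmetric] by (cases u) (simp_all add: distrib_left mult_ac)
next
  case False
  then have "(\<Prod>i<u. of_nat ((p - i) * (q - i)) :: 'a) = 0"
    by (subst prod_zero_iff) (auto intro!: bexI[of _ "min p q"])
  with False show ?thesis
    by (cases u) (auto simp: omega_coeff_def)
qed

lemma prod_of_nat_diff_eq_fact_div:
  "m \<le> n \<Longrightarrow> (\<Prod>i<m. of_nat (n - i) :: 'a::field_char_0) = fact n / fact (n - m)"
proof (induction m)
  case (Suc m)
  then have "n - m = Suc (n - Suc m)"
    by simp
  then have "fact (n - m) = (of_nat (n - m) * fact (n - Suc m) :: 'a)"
    by simp
  with Suc show ?case
    by (simp add: field_simps)
qed simp

lemma omega_coeff_middle:
  assumes "m \<le> p" "m \<le> q"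
  shows "omega_coeff D p q (2 * m) m
    = D ^ m * (fact p * fact q * fact (2 * m) * fact (p + q - m))
      / (fact (p - m) * fact (q - m) * fact m * fact (p + q - 2 * m))"
  unfolding omega_coeff_def of_nat_mult prod.distrib prod_of_nat_diff_eq_fact_div[OF assms(1)]
    prod_of_nat_diff_eq_fact_div[OF assms(2)]
  by (simp add: omega_comb_def mult_ac)

lemma Omega_iterate_qqw:
  assumes euler: "bX0 * d0 Q + bX1 * d1 Q = 2 * Q"
    and jacobian:
      "lift_x (d0 Q) * lift_y (d1 Q) - lift_x (d1 Q) * lift_y (d0 Q) = xyconst D * bracket"
    and "k \<le> p + q"
  shows "(Omega ^^ k) (qqw Q p q 0)
    = (\<Sum>u\<le>k. xyconst (omega_coeff D p q k u) * qqw Q (p - u) (q - u) (2 * u - k))"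
  using \<open>k \<le> p + q\<close>
proof (induction k)
  case 0
  then show ?case
    by (simp add: omega_coeff_def omega_comb_def)
next
  case (Suc k)
  define A where "A u = (if u = 0 then 0
    else D * of_nat ((p - (u - 1)) * (q - (u - 1))) * omega_coeff D p q k (u - 1))" for u
  define B where "B u = of_nat ((2 * u - k) * (2 * u - k + 1 + 2 * (p - u) + 2 * (q - u)))
    * omega_coeff D p q k u" for u
  have step: "xyconst (omega_coeff D p q k u) * Omega (qqw Q (p - u) (q - u) (2 * u - k))
      = xyconst (A (Suc u)) * qqw Q (p - Suc u) (q - Suc u) (2 * Suc u - Suc k)
        + xyconst (B u) * qqw Q (p - u) (q - u) (2 * u - Suc k)" for u
  proof (cases "2 * u < k")
    case True
    then show ?thesis
      by (simp add: A_def B_def omega_coeff_eq_0)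
  next
    case False
    then have "p - u - 1 = p - Suc u" "q - u - 1 = q - Suc u" "Suc (2 * u - k) = 2 * Suc u - Suc k"
      "2 * u - k - 1 = 2 * u - Suc k"
      by auto
    with False show ?thesis
      by (simp add: Omega_qqw[OF euler jacobian] A_def B_def algebra_simps)
  qed
  have "A 0 = 0" "B (Suc k) = 0"
    by (simp_all add: A_def B_def omega_coeff_eq_0)
  have "(Omega ^^ Suc k) (qqw Q p q 0)
      = (\<Sum>u\<le>k. xyconst (A (Suc u)) * qqw Q (p - Suc u) (q - Suc u) (2 * Suc u - Suc k))
        + (\<Sum>u\<le>k. xyconst (B u) * qqw Q (p - u) (q - u) (2 * u - Suc k))"
    using Suc by (simp add: Omega_sum Omega_xyconst_mult step sum.distrib)
  also have "(\<Sum>u\<le>k. xyconst (A (Suc u)) * qqw Q (p - Suc u) (q - Suc u) (2 * Suc u - Suc k))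
      = (\<Sum>u\<le>Suc k. xyconst (A u) * qqw Q (p - u) (q - u) (2 * u - Suc k))"
    using \<open>A 0 = 0\<close>
    by (simp only: sum.atMost_Suc_shift lift_x.hom_zero bconst.hom_zero mult_zero_left add_0)
  also have "(\<Sum>u\<le>k. xyconst (B u) * qqw Q (p - u) (q - u) (2 * u - Suc k))
      = (\<Sum>u\<le>Suc k. xyconst (B u) * qqw Q (p - u) (q - u) (2 * u - Suc k))"
    using \<open>B (Suc k) = 0\<close> by simp
  also have "(\<Sum>u\<le>Suc k. xyconst (A u) * qqw Q (p - u) (q - u) (2 * u - Suc k))
      + (\<Sum>u\<le>Suc k. xyconst (B u) * qqw Q (p - u) (q - u) (2 * u - Suc k))
      = (\<Sum>u\<le>Suc k.
          xyconst (omega_coeff D p q (Suc k) u) * qqw Q (p - u) (q - u) (2 * u - Suc k))"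
    using Suc.prems by (simp add: omega_coeff_Suc A_def B_def sum.distrib[symmetric] algebra_simps)
  finally show ?case .
qed

lemma diag_Omega_iterate_binary_quadratic:
  fixes lam mu nu :: "'a::field_char_0"
  defines "Q \<equiv> binary_quadratic lam mu nu"
    and "D \<equiv> - (mu ^ 2 - 4 * lam * nu)"
  assumes "k \<le> p + q"
  shows "diag ((Omega ^^ k) (lift_x (Q ^ p) * lift_y (Q ^ q)))
    = (if even k then bconst (omega_coeff D p q k (k div 2)) * Q ^ (p - k div 2 + (q - k div 2))
       else 0)"
proof -
  have "lift_x (Q ^ p) * lift_y (Q ^ q) = qqw Q p q 0"
    by (simp add: qqw_def)
  then have "diag ((Omega ^^ k) (lift_x (Q ^ p) * lift_y (Q ^ q)))
      = (\<Sum>u\<le>k. bconst (omega_coeff D p q k u) * diag (qqw Q (p - u) (q - u) (2 * u - k)))"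
    using Omega_iterate_qqw[OF euler_binary_quadratic[of lam mu nu]
        jacobian_binary_quadratic[of lam mu nu] \<open>k \<le> p + q\<close>, folded Q_def D_def]
    by (simp add: diag.hom_sum)
  also have "\<dots> = (\<Sum>u\<le>k.
      if 2 * u = k then bconst (omega_coeff D p q k u) * Q ^ (p - u + (q - u)) else 0)"
    by (intro sum.cong) (auto simp: diag_qqw omega_coeff_eq_0)
  also have "\<dots> = (if even k
      then bconst (omega_coeff D p q k (k div 2)) * Q ^ (p - k div 2 + (q - k div 2)) else 0)"
  proof -
    have "2 * u = k \<longleftrightarrow> even k \<and> u = k div 2" for u
      by auto
    then show ?thesis
      by (simp add: if_distrib)
  qed
  finally show ?thesis .
qed

theorem mainTheorem10:
  fixes p q k :: nat and lam mu nu :: "'a::field_char_0" and Q :: "'a poly poly"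
  assumes hk: "k \<le> 2 * min p q"
    and hQ: "Q = bconst lam * bX0 ^ 2 + bconst mu * bX0 * bX1 + bconst nu * bX1 ^ 2"
  defines "\<Delta> \<equiv> mu ^ 2 - 4 * lam * nu"
  shows "(odd k \<longrightarrow> transvectant (2 * p) (2 * q) k (Q ^ p) (Q ^ q) = 0)
       \<and> (\<forall>m. k = 2 * m \<longrightarrow>
            transvectant (2 * p) (2 * q) k (Q ^ p) (Q ^ q)
            = Q ^ (p + q - 2 * m) * bconst ((- \<Delta>) ^ m) *
              bconst ((fact p * fact q * fact (2 * m) * fact (p + q - m)
                       * fact (2 * p - 2 * m) * fact (2 * q - 2 * m))
                    / (fact (2 * p) * fact (2 * q) * fact m * fact (p + q - 2 * m)
                       * fact (p - m) * fact (q - m))))"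
proof -
  define scale :: 'a where
    "scale = fact (2 * p - k) * fact (2 * q - k) / (fact (2 * p) * fact (2 * q))"
  have "Q = binary_quadratic lam mu nu"
    using hQ by (simp add: binary_quadratic_def)
  then have transvectant: "transvectant (2 * p) (2 * q) k (Q ^ p) (Q ^ q) = bconst scale *
      (if even k then bconst (omega_coeff (- \<Delta>) p q k (k div 2)) * Q ^ (p - k div 2 + (q - k div 2))
       else 0)"
    using hk unfolding transvectant_eq_diag_Omega scale_def \<Delta>_def
    by (simp only: diag_Omega_iterate_binary_quadratic)
  show ?thesis
  proof (intro conjI impI allI)
    assume "odd k"
    then show "transvectant (2 * p) (2 * q) k (Q ^ p) (Q ^ q) = 0"
      by (simp add: transvectant)
  next
    fix m
    assume "k = 2 * m"
    with hk have "m \<le> p" "m \<le> q" "p - m + (q - m) = p + q - 2 * m"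
      by auto
    have "transvectant (2 * p) (2 * q) k (Q ^ p) (Q ^ q)
        = Q ^ (p + q - 2 * m) * bconst (scale * omega_coeff (- \<Delta>) p q k m)"
      using transvectant \<open>p - m + (q - m) = p + q - 2 * m\<close>
      by (simp add: \<open>k = 2 * m\<close> mult_ac)
    also have "scale * omega_coeff (- \<Delta>) p q k m = (- \<Delta>) ^ m *
        ((fact p * fact q * fact (2 * m) * fact (p + q - m)
          * fact (2 * p - 2 * m) * fact (2 * q - 2 * m))
         / (fact (2 * p) * fact (2 * q) * fact m * fact (p + q - 2 * m)
          * fact (p - m) * fact (q - m)))"
      unfolding \<open>k = 2 * m\<close> omega_coeff_middle[OF \<open>m \<le> p\<close> \<open>m \<le> q\<close>] scale_def
      by (simp add: mult_ac)
    finally show "transvectant (2 * p) (2 * q) k (Q ^ p) (Q ^ q)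
        = Q ^ (p + q - 2 * m) * bconst ((- \<Delta>) ^ m) *
          bconst ((fact p * fact q * fact (2 * m) * fact (p + q - m)
                   * fact (2 * p - 2 * m) * fact (2 * q - 2 * m))
                / (fact (2 * p) * fact (2 * q) * fact m * fact (p + q - 2 * m)
                   * fact (p - m) * fact (q - m)))"
      by (simp only: bconst.hom_mult mult.assoc)
  qed
qed

end
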